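(* Let $\Omega_n=\dfrac{\pi^{n/2}}{\Gamma\left(\frac n2+1\right)}$ for $n\in\mathbb{N}_0$. As $n\to\infty$, the following asymptotic series holds: \[ \ln\frac{\Omega_n^2}{\Omega_{n-1}\Omega_{n+1}}=\sum_{j=1}^\infty\frac{\lambda_j}{n^j},\qquad \lambda_j=(-1)^j\left\{2B_{j+1}(1)-B_{j+1}\left(\tfrac12\right)-B_{j+1}\left(\tfrac32\right)\right\}\frac{2^j}{j(j+1)}\quad(j\in\mathbb{N}), \] where $B_m(x)$ denote the Bernoulli polynomials.
   Context: $\Omega_n$ is the volume of the unit ball in $\mathbb{R}^n$; $\Gamma$ is Euler's gamma function. The Bernoulli polynomials are defined by $\frac{te^{xt}}{e^t-1}=\sum_{m\ge0}B_m(x)\frac{t^m}{m!}$. The series equality is an asymptotic expansion: for every $N$, the left side minus $\sum_{j=1}^N\lambda_jn^{-j}$ is $O(n^{-N-1})$ as $n\to\infty$. *)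

theory Defs
  imports "HOL-Analysis.Analysis" "HOL-Library.Landau_Symbols"
    "HOL-Computational_Algebra.Formal_Power_Series"
begin

definition bernoulli_poly :: "nat \<Rightarrow> real \<Rightarrow> real" where
  "bernoulli_poly m x =
     fact m * fps_nth (fps_X * fps_exp x / (fps_exp 1 - 1)) m"

definition lambda_coeff :: "nat \<Rightarrow> real" where
  "lambda_coeff j = (-1) ^ j *
     (2 * bernoulli_poly (j + 1) 1 - bernoulli_poly (j + 1) (1/2)
        - bernoulli_poly (j + 1) (3/2)) * 2 ^ j / (real j * (real j + 1))"

end

theory Submission
  imports Defs "HOL-Probability.Distributions" "HOL-Real_Asymp.Real_Asymp"
begin

text \<open>
  By Gamma(z + 1) = z Gamma(z) the left-hand side equals rho(n/2), where
  rho(x) = ln Gamma(x + 1/2) + ln Gamma(x + 3/2) - 2 ln Gamma(x + 1). Both rho and the Laplace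
  transform of g(t) = (exp(-t/2) + exp(-3t/2) - 2 exp(-t)) / (t (1 - exp(-t))) satisfy the same
  difference equation under x \<mapsto> x + 1 (for the Laplace transform by Frullani's integral)
  and are O(1/x), so they coincide. The kernel g is bounded on [0, \<infinity>), and t^2 g(t) is,
  after t \<mapsto> -t, a combination of the Bernoulli generating functions t exp(c t) / (exp t - 1),
  so its Taylor coefficients are Bernoulli polynomial values; Watson's lemma turns this Taylor
  expansion into the asymptotic series.
\<close>

lemma eval_fps_eq_sum_plus_shift:
  fixes F :: "'a :: {banach, real_normed_field} fps"
  assumes "norm t < fps_conv_radius F"
  shows "eval_fps F t = (\<Sum>k<N. fps_nth F k * t ^ k) + t ^ N * eval_fps (fps_shift N F) t"
proof -
  have "(\<lambda>i. fps_nth (fps_shift N F) i * t ^ i) sums eval_fps (fps_shift N F) t"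
    using assms by (intro sums_eval_fps) simp
  then have "(\<lambda>i. t ^ N * (fps_nth (fps_shift N F) i * t ^ i)) sums (t ^ N * eval_fps (fps_shift N F) t)"
    by (rule sums_mult)
  then have "(\<lambda>i. fps_nth F (i + N) * t ^ (i + N)) sums (t ^ N * eval_fps (fps_shift N F) t)"
    by (simp add: power_add mult_ac)
  then have "(\<lambda>i. fps_nth F i * t ^ i) sums (t ^ N * eval_fps (fps_shift N F) t + (\<Sum>k<N. fps_nth F k * t ^ k))"
    by (subst (asm) sums_iff_shift)
  moreover have "(\<lambda>i. fps_nth F i * t ^ i) sums eval_fps F t"
    using assms by (rule sums_eval_fps)
  ultimately show ?thesis
    using sums_unique2 by (simp add: add.commute)
qed

lemma bounded_minus_polynomial_le_power:
  fixes f :: "real \<Rightarrow> real"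
  assumes "d > 0" and bounded: "\<And>t. t > d \<Longrightarrow> \<bar>f t\<bar> \<le> B"
  shows "\<exists>C. \<forall>t>d. \<bar>f t - (\<Sum>k<N. a k * t ^ k)\<bar> \<le> C * t ^ N"
proof (intro exI allI impI)
  fix t :: real
  assume "t > d"
  have power_le: "t ^ k \<le> t ^ N / d ^ (N - k)" if "k \<le> N" for k
  proof -
    have "t ^ k * d ^ (N - k) \<le> t ^ k * t ^ (N - k)"
      using \<open>t > d\<close> \<open>d > 0\<close> by (intro mult_left_mono power_mono) auto
    also have "\<dots> = t ^ N"
      using that by (simp flip: power_add)
    finally show ?thesis
      using \<open>d > 0\<close> by (simp add: field_simps)
  qed
  have "\<bar>f t - (\<Sum>k<N. a k * t ^ k)\<bar> \<le> \<bar>B\<bar> + (\<Sum>k<N. \<bar>a k\<bar> * t ^ k)"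
    using bounded[OF \<open>t > d\<close>] \<open>t > d\<close> \<open>d > 0\<close>
      sum_abs[of "\<lambda>k. a k * t ^ k" "{..<N}"]
    by (simp add: abs_mult)
  also have "\<dots> \<le> \<bar>B\<bar> * (t ^ N / d ^ N) + (\<Sum>k<N. \<bar>a k\<bar> * (t ^ N / d ^ (N - k)))"
  proof (rule add_mono)
    show "\<bar>B\<bar> \<le> \<bar>B\<bar> * (t ^ N / d ^ N)"
      using mult_left_mono[OF power_le[of 0], of "\<bar>B\<bar>"] by simp
    show "(\<Sum>k<N. \<bar>a k\<bar> * t ^ k) \<le> (\<Sum>k<N. \<bar>a k\<bar> * (t ^ N / d ^ (N - k)))"
      by (intro sum_mono mult_left_mono power_le) auto
  qed
  also have "\<dots> = (\<bar>B\<bar> / d ^ N + (\<Sum>k<N. \<bar>a k\<bar> / d ^ (N - k))) * t ^ N"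
    by (simp add: distrib_right sum_distrib_right)
  finally show "\<bar>f t - (\<Sum>k<N. a k * t ^ k)\<bar>
      \<le> (\<bar>B\<bar> / d ^ N + (\<Sum>k<N. \<bar>a k\<bar> / d ^ (N - k))) * t ^ N" .
qed

lemma has_fps_expansion_remainder_le_power_near_0:
  fixes f :: "real \<Rightarrow> real"
  assumes "f has_fps_expansion F"
  obtains d M where "d > 0"
    and "\<And>t. 0 \<le> t \<Longrightarrow> t \<le> d \<Longrightarrow> \<bar>f t - (\<Sum>k<N. fps_nth F k * t ^ k)\<bar> \<le> M * t ^ N"
proof -
  have radius: "fps_conv_radius F > 0"
    and "eventually (\<lambda>z. eval_fps F z = f z) (nhds 0)"
    using assms by (auto simp: has_fps_expansion_def)
  then obtain e where "e > 0" and eval: "\<And>z. dist z 0 < e \<Longrightarrow> eval_fps F z = f z"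
    unfolding eventually_nhds_metric by auto
  obtain d where "d > 0" "d < e" and d_radius: "ereal d < fps_conv_radius F"
  proof (cases "fps_conv_radius F")
    case (real r)
    with radius \<open>e > 0\<close> show ?thesis
      by (intro that[of "min (r/2) (e/2)"]) (auto simp: min_def)
  next
    case PInf
    with \<open>e > 0\<close> show ?thesis
      by (intro that[of "e/2"]) auto
  qed (use radius in simp)
  have cont: "continuous_on {0..d} (eval_fps (fps_shift N F))"
    using d_radius by (intro continuous_on_subset[OF continuous_on_eval_fps])
      (auto simp: eball_def intro: le_less_trans[of _ "ereal d"])
  obtain M where M: "\<And>t. t \<in> {0..d} \<Longrightarrow> \<bar>eval_fps (fps_shift N F) t\<bar> \<le> M"
    using compact_imp_bounded[OF compact_continuous_image[OF cont compact_Icc]]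
    unfolding bounded_iff by fastforce
  have "\<bar>f t - (\<Sum>k<N. fps_nth F k * t ^ k)\<bar> \<le> M * t ^ N" if "0 \<le> t" "t \<le> d" for t
  proof -
    have "f t = eval_fps F t"
      using eval[of t] that \<open>d < e\<close> by auto
    also have "\<dots> = (\<Sum>k<N. fps_nth F k * t ^ k) + t ^ N * eval_fps (fps_shift N F) t"
      using that d_radius by (intro eval_fps_eq_sum_plus_shift) (auto intro: le_less_trans[of _ "ereal d"])
    moreover have "t ^ N * \<bar>eval_fps (fps_shift N F) t\<bar> \<le> t ^ N * M"
      using M[of t] that by (intro mult_left_mono) auto
    ultimately show ?thesis
      using that by (simp add: abs_mult mult.commute)
  qed
  with \<open>d > 0\<close> show ?thesis
    by (rule that)
qed

lemma has_fps_expansion_remainder_le_power: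
  fixes f :: "real \<Rightarrow> real"
  assumes "f has_fps_expansion F" and bounded: "\<And>t. t > 0 \<Longrightarrow> \<bar>f t\<bar> \<le> B"
  shows "\<exists>C. \<forall>t\<ge>0. \<bar>f t - (\<Sum>k<N. fps_nth F k * t ^ k)\<bar> \<le> C * t ^ N"
proof -
  obtain d M where "d > 0"
    and near: "\<And>t. 0 \<le> t \<Longrightarrow> t \<le> d \<Longrightarrow> \<bar>f t - (\<Sum>k<N. fps_nth F k * t ^ k)\<bar> \<le> M * t ^ N"
    using has_fps_expansion_remainder_le_power_near_0[OF assms(1)] by blast
  have "\<And>t. t > d \<Longrightarrow> \<bar>f t\<bar> \<le> B"
    using bounded \<open>d > 0\<close> by simp
  then obtain C where far: "\<And>t. t > d \<Longrightarrow> \<bar>f t - (\<Sum>k<N. fps_nth F k * t ^ k)\<bar> \<le> C * t ^ N"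
    using bounded_minus_polynomial_le_power[where a = "fps_nth F" and N = N, OF \<open>d > 0\<close>] by blast
  show ?thesis
  proof (intro exI allI impI)
    fix t :: real
    assume "t \<ge> 0"
    then show "\<bar>f t - (\<Sum>k<N. fps_nth F k * t ^ k)\<bar> \<le> max M C * t ^ N"
      using near[of t] far[of t] mult_right_mono[of M "max M C" "t ^ N"] mult_right_mono[of C "max M C" "t ^ N"]
      by (cases "t \<le> d") auto
  qed
qed

lemma has_fps_expansion_reflect:
  fixes F :: "real fps"
  assumes "f has_fps_expansion F"
  shows "(\<lambda>x. f (- x)) has_fps_expansion Abs_fps (\<lambda>n. (- 1) ^ n * fps_nth F n)"
proof -
  define G where "G = Abs_fps (\<lambda>n. (- 1) ^ n * fps_nth F n)"
  have radius: "fps_conv_radius G = fps_conv_radius F"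
    unfolding fps_conv_radius_def G_def
    by (rule conv_radius_cong) (simp add: abs_mult power_abs)
  have eval: "eval_fps G z = eval_fps F (- z)" for z
    unfolding eval_fps_def G_def by (simp add: power_minus[of z] mult_ac)
  have "eventually (\<lambda>z. eval_fps F z = f z) (nhds 0)"
    using assms by (auto simp: has_fps_expansion_def)
  then have "eventually (\<lambda>z. eval_fps F z = f z) (filtermap uminus (nhds 0))"
    by (simp add: filtermap_nhds_minus)
  then have "eventually (\<lambda>z. eval_fps F (- z) = f (- z)) (nhds 0)"
    unfolding eventually_filtermap .
  then show ?thesis
    using assms radius unfolding G_def[symmetric] by (auto simp: has_fps_expansion_def eval)
qed

definition laplace :: "(real \<Rightarrow> real) \<Rightarrow> real \<Rightarrow> real" where
  "laplace f x = (\<integral>t. indicator {0..} t * (exp (- (x*t)) * f t) \<partial>lborel)"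

lemma has_bochner_integral_laplace_power:
  fixes l :: real
  assumes "l > 0"
  shows "has_bochner_integral lborel (\<lambda>t. indicator {0..} t * (t ^ k * exp (- (l*t)))) (fact k / l ^ Suc k)"
proof -
  have "(\<integral>\<^sup>+ t. ennreal (erlang_density k l t) \<partial>lborel) = ennreal 1"
    using nn_integral_erlang_ith_moment[OF assms, of k 0] by simp
  then have "has_bochner_integral lborel (erlang_density k l) 1"
    using assms by (intro has_bochner_integral_nn_integral) auto
  then have "has_bochner_integral lborel (\<lambda>t. fact k / l ^ Suc k * erlang_density k l t)
      (fact k / l ^ Suc k * 1)"
    by (rule has_bochner_integral_mult_right)
  moreover have "(\<lambda>t. fact k / l ^ Suc k * erlang_density k l t)
      = (\<lambda>t. indicator {0..} t * (t ^ k * exp (- (l*t))))"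
    using assms by (intro ext) (auto simp: erlang_density_def indicator_def field_simps)
  ultimately show ?thesis
    by simp
qed

lemma integrable_laplace_power_bound:
  fixes f :: "real \<Rightarrow> real"
  assumes [measurable]: "f \<in> borel_measurable borel"
    and "x > 0" and bound: "\<And>t. t \<ge> 0 \<Longrightarrow> \<bar>f t\<bar> \<le> C * t ^ N"
  shows "integrable lborel (\<lambda>t. indicator {0..} t * (exp (- (x*t)) * f t))"
proof (rule Bochner_Integration.integrable_bound)
  have "0 \<le> C"
    using bound[of 1] abs_ge_zero[of "f 1"] by simp
  show "integrable lborel (\<lambda>t. C * (indicator {0..} t * (t ^ N * exp (- (x*t)))))"
    using has_bochner_integral_laplace_power[OF \<open>x > 0\<close>, of N] by (auto simp: integrable.simps)
  show "AE t in lborel. norm (indicator {0..} t * (exp (- (x*t)) * f t))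
          \<le> norm (C * (indicator {0..} t * (t ^ N * exp (- (x*t)))))"
  proof (intro AE_I2)
    fix t :: real
    show "norm (indicator {0..} t * (exp (- (x*t)) * f t))
          \<le> norm (C * (indicator {0..} t * (t ^ N * exp (- (x*t)))))"
    proof (cases "t \<ge> 0")
      case True
      then have "exp (- (x*t)) * \<bar>f t\<bar> \<le> exp (- (x*t)) * (C * t ^ N)"
        using bound by (intro mult_left_mono) auto
      then show ?thesis
        using True \<open>0 \<le> C\<close> by (simp add: abs_mult mult_ac)
    qed simp
  qed
qed measurable

lemma abs_laplace_le_power_bound:
  fixes f :: "real \<Rightarrow> real"
  assumes [measurable]: "f \<in> borel_measurable borel"
    and "x > 0" and bound: "\<And>t. t \<ge> 0 \<Longrightarrow> \<bar>f t\<bar> \<le> C * t ^ N"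
  shows "\<bar>laplace f x\<bar> \<le> C * fact N / x ^ Suc N"
proof -
  have majorant: "has_bochner_integral lborel (\<lambda>t. C * (indicator {0..} t * (t ^ N * exp (- (x*t)))))
      (C * (fact N / x ^ Suc N))"
    by (intro has_bochner_integral_mult_right has_bochner_integral_laplace_power \<open>x > 0\<close>)
  have "norm (laplace f x) \<le> (\<integral>t. C * (indicator {0..} t * (t ^ N * exp (- (x*t)))) \<partial>lborel)"
    unfolding laplace_def
  proof (rule Bochner_Integration.integral_norm_bound_integral)
    show "integrable lborel (\<lambda>t. indicator {0..} t * (exp (- (x*t)) * f t))"
      using assms by (rule integrable_laplace_power_bound)
    show "integrable lborel (\<lambda>t. C * (indicator {0..} t * (t ^ N * exp (- (x*t)))))"
      using majorant by (rule integrable.intros)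
    show "norm (indicator {0..} t * (exp (- (x*t)) * f t))
        \<le> C * (indicator {0..} t * (t ^ N * exp (- (x*t))))" for t
    proof (cases "t \<ge> 0")
      case True
      then have "exp (- (x*t)) * \<bar>f t\<bar> \<le> exp (- (x*t)) * (C * t ^ N)"
        using bound by (intro mult_left_mono) auto
      with True show ?thesis
        by (simp add: abs_mult mult_ac)
    qed simp
  qed
  also have "\<dots> = C * (fact N / x ^ Suc N)"
    using majorant by (rule has_bochner_integral_integral_eq)
  finally show ?thesis
    by simp
qed

lemma has_bochner_integral_laplace_polynomial:
  fixes a :: "nat \<Rightarrow> real" and x :: real
  assumes "x > 0"
  shows "has_bochner_integral lborel (\<lambda>t. indicator {0..} t * (exp (- (x*t)) * (\<Sum>k<N. a k * t ^ k)))
           (\<Sum>k<N. a k * fact k / x ^ Suc k)"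
proof -
  have "has_bochner_integral lborel (\<lambda>t. \<Sum>k<N. a k * (indicator {0..} t * (t ^ k * exp (- (x*t)))))
          (\<Sum>k<N. a k * (fact k / x ^ Suc k))"
    by (intro has_bochner_integral_sum has_bochner_integral_mult_right
        has_bochner_integral_laplace_power assms)
  then show ?thesis
    by (simp add: sum_distrib_left mult_ac)
qed

lemma watson_lemma:
  fixes f :: "real \<Rightarrow> real"
  assumes [measurable]: "f \<in> borel_measurable borel"
    and "x > 0"
    and remainder: "\<And>t. t \<ge> 0 \<Longrightarrow> \<bar>f t - (\<Sum>k<N. a k * t ^ k)\<bar> \<le> C * t ^ N"
  shows "\<bar>laplace f x - (\<Sum>k<N. a k * fact k / x ^ Suc k)\<bar> \<le> C * fact N / x ^ Suc N"
proof -
  define r where "r t = f t - (\<Sum>k<N. a k * t ^ k)" for t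
  have [measurable]: "r \<in> borel_measurable borel"
    unfolding r_def by measurable
  have "integrable lborel (\<lambda>t. indicator {0..} t * (exp (- (x*t)) * r t))"
    using remainder \<open>x > 0\<close> unfolding r_def by (intro integrable_laplace_power_bound) auto
  then have "has_bochner_integral lborel
      (\<lambda>t. indicator {0..} t * (exp (- (x*t)) * r t)
         + indicator {0..} t * (exp (- (x*t)) * (\<Sum>k<N. a k * t ^ k)))
      (laplace r x + (\<Sum>k<N. a k * fact k / x ^ Suc k))"
    unfolding laplace_def
    by (intro has_bochner_integral_add has_bochner_integral_laplace_polynomial \<open>x > 0\<close>)
      (simp add: has_bochner_integral_integrable)
  then have "laplace f x = laplace r x + (\<Sum>k<N. a k * fact k / x ^ Suc k)"
    unfolding laplace_def r_def by (simp add: algebra_simps has_bochner_integral_integral_eq)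
  moreover have "\<bar>laplace r x\<bar> \<le> C * fact N / x ^ Suc N"
    using remainder \<open>x > 0\<close> unfolding r_def by (intro abs_laplace_le_power_bound) auto
  ultimately show ?thesis
    by simp
qed

lemma nn_integral_exp_Icc:
  fixes t :: real
  assumes "t > 0" "a \<le> b"
  shows "(\<integral>\<^sup>+s. ennreal (exp (- (s*t))) * indicator {a..b} s \<partial>lborel)
           = ennreal ((exp (- (a*t)) - exp (- (b*t))) / t)"
proof -
  have "(\<integral>\<^sup>+s. ennreal (exp (- (s*t))) * indicator {a..b} s \<partial>lborel)
          = ennreal ((\<lambda>s. - exp (- (s*t)) / t) b - (\<lambda>s. - exp (- (s*t)) / t) a)"
  proof (rule nn_integral_FTC_Icc)
    show "((\<lambda>s. - exp (- (s*t)) / t) has_real_derivative exp (- (s*t))) (at s)" for s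
      using assms by (auto intro!: derivative_eq_intros simp: field_simps)
  qed (use assms in auto)
  then show ?thesis
    by (simp add: diff_divide_distrib)
qed

lemma nn_integral_exp_atLeast0:
  fixes s :: real
  assumes "s > 0"
  shows "(\<integral>\<^sup>+t. ennreal (exp (- (s*t))) * indicator {0..} t \<partial>lborel) = ennreal (1/s)"
proof -
  have "(\<integral>\<^sup>+t. ennreal (exp (- (s*t))) * indicator {0..} t \<partial>lborel)
          = ennreal (0 - (\<lambda>t. - exp (- (s*t)) / s) 0)"
  proof (rule nn_integral_FTC_atLeast)
    show "((\<lambda>t. - exp (- (s*t)) / s) has_real_derivative exp (- (s*t))) (at t)" for t
      using assms by (auto intro!: derivative_eq_intros simp: field_simps)
    show "((\<lambda>t. - exp (- (s*t)) / s) \<longlongrightarrow> 0) at_top"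
      using assms by real_asymp
  qed auto
  then show ?thesis
    by simp
qed

lemma frullani_exp:
  fixes a b :: real
  assumes "0 < a" "a \<le> b"
  shows "has_bochner_integral lborel (\<lambda>t. indicator {0..} t * ((exp (- (a*t)) - exp (- (b*t))) / t))
           (ln b - ln a)"
proof -
  define f where "f t = indicator {0..} t * ((exp (- (a*t)) - exp (- (b*t))) / t)" for t
  define h where "h s t = ennreal (exp (- (s*t)) * indicator {0..} t * indicator {a..b} s)" for s t :: real
  have [measurable]: "f \<in> borel_measurable borel"
    unfolding f_def by measurable
  have f_nonneg: "f t \<ge> 0" for t
    using assms by (cases "t > 0") (auto simp: f_def indicator_def mult_right_mono)
  have "(\<integral>\<^sup>+t. ennreal (f t) \<partial>lborel) = (\<integral>\<^sup>+t. (\<integral>\<^sup>+s. h s t \<partial>lborel) \<partial>lborel)"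
  proof (rule nn_integral_cong_AE)
    show "AE t in lborel. ennreal (f t) = (\<integral>\<^sup>+s. h s t \<partial>lborel)"
      using AE_lborel_singleton[of 0]
    proof eventually_elim
      case (elim t)
      show ?case
      proof (cases "t > 0")
        case True
        then have "(\<integral>\<^sup>+s. h s t \<partial>lborel) = (\<integral>\<^sup>+s. ennreal (exp (- (s*t))) * indicator {a..b} s \<partial>lborel)"
          by (intro nn_integral_cong) (auto simp: h_def indicator_def)
        with True show ?thesis
          using assms by (simp add: nn_integral_exp_Icc f_def)
      qed (use elim in \<open>simp add: f_def h_def indicator_def\<close>)
    qed
  qed
  also have "\<dots> = (\<integral>\<^sup>+s. (\<integral>\<^sup>+t. h s t \<partial>lborel) \<partial>lborel)"
    by (rule lborel_pair.Fubini') (unfold h_def, measurable)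
  also have "\<dots> = (\<integral>\<^sup>+s. ennreal (1/s) * indicator {a..b} s \<partial>lborel)"
  proof (rule nn_integral_cong)
    fix s :: real
    show "(\<integral>\<^sup>+t. h s t \<partial>lborel) = ennreal (1/s) * indicator {a..b} s"
    proof (cases "s \<in> {a..b}")
      case True
      then have "(\<integral>\<^sup>+t. h s t \<partial>lborel) = (\<integral>\<^sup>+t. ennreal (exp (- (s*t))) * indicator {0..} t \<partial>lborel)"
        by (intro nn_integral_cong) (auto simp: h_def indicator_def)
      with True show ?thesis
        using assms by (simp add: nn_integral_exp_atLeast0)
    qed (simp add: h_def)
  qed
  also have "\<dots> = ennreal (ln b - ln a)"
  proof (rule nn_integral_FTC_Icc)
    show "(ln has_real_derivative 1/s) (at s)" if "s \<in> {a..b}" for s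
      using that assms by (auto intro!: derivative_eq_intros)
  qed (use assms in auto)
  finally have "has_bochner_integral lborel f (ln b - ln a)"
    using assms f_nonneg by (intro has_bochner_integral_nn_integral) auto
  then show ?thesis
    unfolding f_def .
qed

lemma periodic_decaying_eq_0:
  fixes h :: "real \<Rightarrow> real"
  assumes periodic: "\<And>y. y > 0 \<Longrightarrow> h (y + 1) = h y"
    and decay: "\<And>y. y > 0 \<Longrightarrow> \<bar>h y\<bar> \<le> C / y"
    and "x > 0"
  shows "h x = 0"
proof (rule ccontr)
  assume "h x \<noteq> 0"
  have shift: "h (x + real m) = h x" for m
  proof (induction m)
    case (Suc m)
    then show ?case
      using periodic[of "x + real m"] \<open>x > 0\<close> by (simp add: add_ac)
  qed simp
  obtain m :: nat where "C / \<bar>h x\<bar> < real m"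
    using reals_Archimedean2 by blast
  then have "C < real m * \<bar>h x\<bar>"
    using \<open>h x \<noteq> 0\<close> by (simp add: field_simps)
  also have "\<dots> < (x + real m) * \<bar>h x\<bar>"
    using \<open>h x \<noteq> 0\<close> \<open>x > 0\<close> by (intro mult_strict_right_mono) auto
  also have "\<dots> \<le> C"
    using decay[of "x + real m"] \<open>x > 0\<close> by (simp add: shift field_simps)
  finally show False
    by simp
qed

definition bernoulli_fps :: "real \<Rightarrow> real fps" where
  "bernoulli_fps x = fps_X * fps_exp x / (fps_exp 1 - 1)"

lemma bernoulli_poly_conv_fps: "bernoulli_poly m x = fact m * fps_nth (bernoulli_fps x) m"
  unfolding bernoulli_poly_def bernoulli_fps_def ..

lemma subdegree_fps_exp_minus_1: "subdegree (fps_exp (1::real) - 1) = 1"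
  and subdegree_1_minus_fps_exp: "subdegree (1 - fps_exp (1::real)) = 1"
  by (rule subdegreeI; simp)+

lemma bernoulli_fps_conv_inverse:
  "bernoulli_fps x = fps_exp x * inverse (unit_factor (fps_exp 1 - 1))"
proof -
  have "bernoulli_fps x = fps_shift 1 (fps_X * fps_exp x * inverse (unit_factor (fps_exp 1 - 1)))"
    unfolding bernoulli_fps_def fps_divide_def subdegree_fps_exp_minus_1 by simp
  also have "\<dots> = fps_exp x * inverse (unit_factor (fps_exp 1 - 1))"
    by (simp add: fps_eq_iff mult.assoc)
  finally show ?thesis .
qed

lemma bernoulli_fps_eq: "bernoulli_fps x = fps_exp x * bernoulli_fps 0"
  by (simp add: bernoulli_fps_conv_inverse)

definition bernoulli_second_diff_fps :: "real fps" where
  "bernoulli_second_diff_fps = bernoulli_fps (1/2) + bernoulli_fps (3/2) - fps_const 2 * bernoulli_fps 1"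

lemma bernoulli_second_diff_fps_eq:
  "bernoulli_second_diff_fps = (fps_exp (1/2) + fps_exp (3/2) - fps_const 2 * fps_exp 1) * bernoulli_fps 0"
  unfolding bernoulli_second_diff_fps_def by (subst (1 2 3) bernoulli_fps_eq) (simp add: algebra_simps)

lemma bernoulli_second_diff_fps_nth_0: "fps_nth bernoulli_second_diff_fps 0 = 0"
  and bernoulli_second_diff_fps_nth_1: "fps_nth bernoulli_second_diff_fps 1 = 0"
  and bernoulli_second_diff_fps_nth_2: "fps_nth bernoulli_second_diff_fps 2 = 1/4"
  unfolding bernoulli_second_diff_fps_eq
  by (simp_all add: fps_mult_nth numeral_2_eq_2 bernoulli_fps_conv_inverse subdegree_1_minus_fps_exp)

definition bernoulli_egf :: "real \<Rightarrow> real \<Rightarrow> real" where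
  "bernoulli_egf x t = (if t = 0 then 1 else t * exp (x * t) / (exp t - 1))"

lemma has_fps_expansion_bernoulli_egf: "bernoulli_egf x has_fps_expansion bernoulli_fps x"
proof -
  have "(\<lambda>t. if t = 0 then 1 else t * exp (x * t) / (exp t - 1)) has_fps_expansion
          fps_X * fps_exp x / (fps_exp 1 - 1)"
  proof (rule has_fps_expansion_divide)
    show "(\<lambda>t. t * exp (x * t)) has_fps_expansion fps_X * fps_exp x"
      by (intro fps_expansion_intros)
    show "(\<lambda>t. exp t - 1) has_fps_expansion fps_exp 1 - (1 :: real fps)"
      using has_fps_expansion_diff[OF has_fps_expansion_exp[of "1::real"] has_fps_expansion_1]
      by simp
    have "subdegree (fps_X * fps_exp x) = 1"
      by (rule subdegreeI) (auto simp: fps_X_mult_nth)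
    then show "subdegree (fps_exp (1::real) - 1) \<le> subdegree (fps_X * fps_exp x)"
      unfolding subdegree_fps_exp_minus_1 by simp
    show "fps_exp 1 - 1 \<noteq> (0 :: real fps)"
      using subdegree_fps_exp_minus_1 by (metis subdegree_0 zero_neq_one)
  qed (simp add: subdegree_fps_exp_minus_1 subdegree_1_minus_fps_exp)
  then show ?thesis
    unfolding bernoulli_egf_def[abs_def] bernoulli_fps_def .
qed

definition laplace_kernel :: "real \<Rightarrow> real" where
  "laplace_kernel t = (if t = 0 then 1/4 else
     (exp (- (t/2)) + exp (- (3*t/2)) - 2 * exp (- t)) / (t * (1 - exp (- t))))"

definition laplace_kernel_fps :: "real fps" where
  "laplace_kernel_fps = fps_shift 2 (Abs_fps (\<lambda>n. (- 1) ^ n * fps_nth bernoulli_second_diff_fps n))"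

lemma fps_nth_laplace_kernel_fps:
  "fps_nth laplace_kernel_fps k = (- 1) ^ k * fps_nth bernoulli_second_diff_fps (k + 2)"
  by (simp add: laplace_kernel_fps_def)

lemma has_fps_expansion_laplace_kernel: "laplace_kernel has_fps_expansion laplace_kernel_fps"
proof -
  define k where "k t = bernoulli_egf (1/2) t + bernoulli_egf (3/2) t - 2 * bernoulli_egf 1 t" for t
  define K where "K = Abs_fps (\<lambda>n. (- 1) ^ n * fps_nth bernoulli_second_diff_fps n)"
  have "k has_fps_expansion bernoulli_second_diff_fps"
    unfolding k_def[abs_def] bernoulli_second_diff_fps_def
    by (intro has_fps_expansion_diff has_fps_expansion_add has_fps_expansion_cmult_left
        has_fps_expansion_bernoulli_egf)
  then have "(\<lambda>t. k (- t)) has_fps_expansion K"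
    unfolding K_def by (rule has_fps_expansion_reflect)
  moreover have "2 \<le> subdegree K"
  proof (rule subdegree_geI)
    have "fps_nth K 2 \<noteq> 0"
      by (simp add: K_def bernoulli_second_diff_fps_nth_2)
    then show "K \<noteq> 0"
      by auto
    show "fps_nth K i = 0" if "i < 2" for i
      using that bernoulli_second_diff_fps_nth_0 bernoulli_second_diff_fps_nth_1
      by (auto simp: K_def less_2_cases_iff)
  qed
  ultimately have "(\<lambda>t. if t = 0 then 1/4 else k (- t) / t ^ 2) has_fps_expansion fps_shift 2 K"
    by (rule has_fps_expansion_shift) (simp add: K_def bernoulli_second_diff_fps_nth_2)
  also have "(\<lambda>t. if t = 0 then 1/4 else k (- t) / t ^ 2) = laplace_kernel"
  proof
    fix t :: real
    show "(if t = 0 then 1/4 else k (- t) / t ^ 2) = laplace_kernel t"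
    proof (cases "t = 0")
      case False
      then have nz: "1 - exp (- t) \<noteq> 0"
        by simp
      have egf: "bernoulli_egf c (- t) = t * exp (- (c*t)) / (1 - exp (- t))" for c
        using False nz by (simp add: bernoulli_egf_def field_simps)
      have k_neg: "k (- t) = t * (exp (- (t/2)) + exp (- (3*t/2)) - 2 * exp (- t)) / (1 - exp (- t))"
        unfolding k_def egf by (simp add: algebra_simps add_divide_distrib diff_divide_distrib)
      show ?thesis
        using False unfolding k_neg by (simp add: laplace_kernel_def power2_eq_square)
    qed (simp add: laplace_kernel_def)
  qed
  finally show ?thesis
    unfolding laplace_kernel_fps_def K_def .
qed

lemma abs_laplace_kernel_le:
  assumes "t \<ge> 0"
  shows "\<bar>laplace_kernel t\<bar> \<le> 1/2"
proof (cases "t = 0")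
  case False
  with assms have "t > 0"
    by simp
  define u where "u = exp (- (t/2))"
  have u: "0 < u" "u < 1" "1 - u \<le> t/2"
    using \<open>t > 0\<close> exp_ge_add_one_self[of "- (t/2)"] by (auto simp: u_def)
  have "exp (- t) = u ^ 2" "exp (- (3*t/2)) = u ^ 3"
    unfolding u_def by (simp_all flip: exp_of_nat_mult)
  then have "laplace_kernel t = (u * (1 - u)) * (1 - u) / ((t * (1 + u)) * (1 - u))"
    using \<open>t > 0\<close>
    by (simp add: laplace_kernel_def u_def[symmetric] algebra_simps power2_eq_square power3_eq_cube)
  also have "\<dots> = u * (1 - u) / (t * (1 + u))"
    using u by simp
  finally have g: "laplace_kernel t = u * (1 - u) / (t * (1 + u))" .
  have "u * (1 - u) \<le> 1 - u"
    using u by (intro mult_left_le_one_le) auto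
  then have "u * (1 - u) \<le> t/2"
    using u by linarith
  then have "u * (1 - u) / (t * (1 + u)) \<le> (t/2) / t"
    using u \<open>t > 0\<close> by (intro frac_le) auto
  then show ?thesis
    using g u \<open>t > 0\<close> by simp
qed (simp add: laplace_kernel_def)

lemma laplace_kernel_shift_diff:
  assumes "t > 0"
  shows "exp (- (x*t)) * laplace_kernel t - exp (- ((x+1)*t)) * laplace_kernel t =
     (exp (- ((x+1/2)*t)) - exp (- ((x+1)*t))) / t - (exp (- ((x+1)*t)) - exp (- ((x+3/2)*t))) / t"
proof -
  have shift: "exp (- ((x+c)*t)) = exp (- (x*t)) * exp (- (c*t))" for c
    by (simp add: algebra_simps flip: exp_add)
  have kernel: "(1 - exp (- t)) * laplace_kernel t = (exp (- (t/2)) + exp (- (3*t/2)) - 2 * exp (- t)) / t"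
    using assms by (simp add: laplace_kernel_def)
  have "exp (- (x*t)) * laplace_kernel t - exp (- ((x+1)*t)) * laplace_kernel t =
      exp (- (x*t)) * ((1 - exp (- t)) * laplace_kernel t)"
    unfolding shift by (simp add: algebra_simps)
  also have "\<dots> = exp (- (x*t)) * ((exp (- (t/2)) + exp (- (3*t/2)) - 2 * exp (- t)) / t)"
    by (simp only: kernel)
  also have "\<dots> = (exp (- ((x+1/2)*t)) - exp (- ((x+1)*t))) / t
      - (exp (- ((x+1)*t)) - exp (- ((x+3/2)*t))) / t"
    using assms unfolding shift by (simp add: field_simps)
  finally show ?thesis .
qed

lemma laplace_kernel_measurable [measurable]: "laplace_kernel \<in> borel_measurable borel"
  unfolding laplace_kernel_def by measurable

lemma laplace_laplace_kernel_diff: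
  assumes "x > 0"
  shows "laplace laplace_kernel x - laplace laplace_kernel (x + 1)
           = 2 * ln (x + 1) - ln (x + 1/2) - ln (x + 3/2)"
proof -
  have integrable: "integrable lborel (\<lambda>t. indicator {0..} t * (exp (- (y*t)) * laplace_kernel t))"
    if "y > 0" for y
    using that abs_laplace_kernel_le
    by (intro integrable_laplace_power_bound[where C = "1/2" and N = 0]) auto
  have "has_bochner_integral lborel
          (\<lambda>t. indicator {0..} t * ((exp (- ((x+1/2)*t)) - exp (- ((x+1)*t))) / t)
             - indicator {0..} t * ((exp (- ((x+1)*t)) - exp (- ((x+3/2)*t))) / t))
          ((ln (x+1) - ln (x+1/2)) - (ln (x+3/2) - ln (x+1)))"
    using assms by (intro has_bochner_integral_diff frullani_exp) auto
  also have "(\<lambda>t. indicator {0..} t * ((exp (- ((x+1/2)*t)) - exp (- ((x+1)*t))) / t)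
               - indicator {0..} t * ((exp (- ((x+1)*t)) - exp (- ((x+3/2)*t))) / t))
           = (\<lambda>t. indicator {0..} t * (exp (- (x*t)) * laplace_kernel t)
               - indicator {0..} t * (exp (- ((x+1)*t)) * laplace_kernel t))"
  proof
    fix t :: real
    show "indicator {0..} t * ((exp (- ((x+1/2)*t)) - exp (- ((x+1)*t))) / t)
            - indicator {0..} t * ((exp (- ((x+1)*t)) - exp (- ((x+3/2)*t))) / t)
          = indicator {0..} t * (exp (- (x*t)) * laplace_kernel t)
            - indicator {0..} t * (exp (- ((x+1)*t)) * laplace_kernel t)"
      using laplace_kernel_shift_diff[of t x]
      by (cases "t > 0") (auto simp: indicator_def not_less right_diff_distrib)
  qed
  finally show ?thesis
    using integrable[of x] integrable[of "x+1"] assms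
    by (simp add: laplace_def has_bochner_integral_iff)
qed

definition log_Gamma_ratio :: "real \<Rightarrow> real" where
  "log_Gamma_ratio x = ln (Gamma (x + 1/2)) + ln (Gamma (x + 3/2)) - 2 * ln (Gamma (x + 1))"

lemma ln_Gamma_real_plus1:
  fixes y :: real
  assumes "y > 0"
  shows "ln (Gamma (y + 1)) = ln y + ln (Gamma y)"
proof -
  have "y \<notin> \<int>\<^sub>\<le>\<^sub>0"
    using assms nonpos_Ints_nonpos by force
  then have "Gamma (y + 1) = y * Gamma y"
    by (rule Gamma_plus1)
  with assms show ?thesis
    by (simp add: ln_mult_pos)
qed

lemma log_Gamma_ratio_diff:
  assumes "x > 0"
  shows "log_Gamma_ratio x - log_Gamma_ratio (x + 1) = 2 * ln (x + 1) - ln (x + 1/2) - ln (x + 3/2)"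
  using assms ln_Gamma_real_plus1[of "x + 1/2"] ln_Gamma_real_plus1[of "x + 3/2"]
    ln_Gamma_real_plus1[of "x + 1"]
  by (simp add: log_Gamma_ratio_def add_ac)

lemma ln_Gamma_midpoint_le:
  fixes a b :: real
  assumes "a > 0" "b > 0"
  shows "ln (Gamma ((a + b) / 2)) \<le> (ln (Gamma a) + ln (Gamma b)) / 2"
  using convex_onD[OF log_convex_Gamma_real, of "1/2" a b] assms
  by (simp add: add_divide_distrib)

lemma abs_log_Gamma_ratio_le:
  assumes "x > 0"
  shows "\<bar>log_Gamma_ratio x\<bar> \<le> 1 / (2 * x)"
proof -
  have mid: "((x + 1/2) + (x + 3/2)) / 2 = x + 1" "(x + (x + 1)) / 2 = x + 1/2"
      "((x + 1) + (x + 2)) / 2 = x + 3/2"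
    by simp_all
  have "ln (Gamma (x + 1)) \<le> (ln (Gamma (x + 1/2)) + ln (Gamma (x + 3/2))) / 2"
    using ln_Gamma_midpoint_le[of "x + 1/2" "x + 3/2"] assms unfolding mid by simp
  then have lower: "0 \<le> log_Gamma_ratio x"
    unfolding log_Gamma_ratio_def by simp
  have "ln (Gamma (x + 1/2)) \<le> (ln (Gamma x) + ln (Gamma (x + 1))) / 2"
    using ln_Gamma_midpoint_le[of x "x + 1"] assms unfolding mid by simp
  moreover have "ln (Gamma (x + 3/2)) \<le> (ln (Gamma (x + 1)) + ln (Gamma (x + 2))) / 2"
    using ln_Gamma_midpoint_le[of "x + 1" "x + 2"] assms unfolding mid by simp
  moreover have "ln (Gamma (x + 2)) = ln (x + 1) + ln (Gamma (x + 1))"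
    using ln_Gamma_real_plus1[of "x + 1"] assms by (simp add: add.assoc)
  moreover have "ln (Gamma (x + 1)) = ln x + ln (Gamma x)"
    using ln_Gamma_real_plus1[OF assms] .
  ultimately have "log_Gamma_ratio x \<le> (ln (x + 1) - ln x) / 2"
    unfolding log_Gamma_ratio_def by argo
  also have "ln (x + 1) - ln x = ln (1 + 1/x)"
  proof -
    have "1 + 1/x = (x + 1) / x"
      using assms by (simp add: field_simps)
    with assms show ?thesis
      by (simp add: ln_div)
  qed
  also have "ln (1 + 1/x) \<le> 1/x"
    using assms by (intro ln_add_one_self_le_self) simp
  finally show ?thesis
    using lower by simp
qed

lemma log_Gamma_ratio_eq_laplace:
  assumes "x > 0"
  shows "log_Gamma_ratio x = laplace laplace_kernel x"
proof -
  have "\<bar>log_Gamma_ratio y - laplace laplace_kernel y\<bar> \<le> 1 / y" if "y > 0" for y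
  proof -
    have "\<bar>laplace laplace_kernel y\<bar> \<le> 1 / (2 * y)"
      using watson_lemma[where f = laplace_kernel and N = 0 and C = "1/2"] that abs_laplace_kernel_le
      by simp
    then show ?thesis
      using abs_log_Gamma_ratio_le[OF that] abs_triangle_ineq4[of "log_Gamma_ratio y"] by simp
  qed
  moreover have "log_Gamma_ratio (y + 1) - laplace laplace_kernel (y + 1)
      = log_Gamma_ratio y - laplace laplace_kernel y" if "y > 0" for y
    using log_Gamma_ratio_diff[OF that] laplace_laplace_kernel_diff[OF that] by simp
  ultimately have "log_Gamma_ratio x - laplace laplace_kernel x = 0"
    using assms by (intro periodic_decaying_eq_0[where h = "\<lambda>y. log_Gamma_ratio y - laplace laplace_kernel y"])
  then show ?thesis
    by simp
qed

lemma ln_unit_ball_vol_ratio: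
  fixes d :: real
  assumes "d > -1"
  shows "ln (unit_ball_vol d ^ 2 / (unit_ball_vol (d - 1) * unit_ball_vol (d + 1))) = log_Gamma_ratio (d / 2)"
proof -
  define x where "x = d / 2"
  have Gamma_pos: "Gamma (x + 1/2) > 0" "Gamma (x + 1) > 0" "Gamma (x + 3/2) > 0"
    using assms by (auto simp: x_def)
  have "pi powr ((d - 1) / 2) * pi powr ((d + 1) / 2) = (pi powr (d / 2)) ^ 2"
    by (simp add: power2_eq_square add_divide_distrib diff_divide_distrib flip: powr_add)
  then have "unit_ball_vol d ^ 2 / (unit_ball_vol (d - 1) * unit_ball_vol (d + 1))
        = Gamma (x + 1/2) * Gamma (x + 3/2) / Gamma (x + 1) ^ 2"
    using Gamma_pos by (simp add: unit_ball_vol_def x_def field_simps power2_eq_square)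
  also have "ln \<dots> = log_Gamma_ratio x"
    using Gamma_pos by (simp add: log_Gamma_ratio_def ln_div ln_mult_pos ln_realpow)
  finally show ?thesis
    unfolding x_def .
qed

lemma lambda_coeff_Suc:
  "lambda_coeff (Suc k) = fps_nth laplace_kernel_fps k * fact k * 2 ^ Suc k"
proof -
  define A where "A = fps_nth bernoulli_second_diff_fps (Suc k + 1)"
  define D where "D = real (Suc k) * (real (Suc k) + 1)"
  have "2 * bernoulli_poly (Suc k + 1) 1 - bernoulli_poly (Suc k + 1) (1/2) - bernoulli_poly (Suc k + 1) (3/2)
          = - (fact (Suc k + 1) * A)"
    by (simp add: A_def bernoulli_poly_conv_fps bernoulli_second_diff_fps_def algebra_simps)
  moreover have "fact (Suc k + 1) = D * (fact k :: real)"
    by (simp add: D_def algebra_simps)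
  ultimately have "lambda_coeff (Suc k) = (- 1) ^ Suc k * (- (D * fact k * A)) * 2 ^ Suc k / D"
    by (simp add: lambda_coeff_def D_def)
  also have "\<dots> = (- 1) ^ k * A * fact k * 2 ^ Suc k"
    by (simp add: D_def)
  finally show ?thesis
    by (simp add: A_def fps_nth_laplace_kernel_fps)
qed

lemma log_Gamma_ratio_asymptotic:
  "\<exists>C. \<forall>x>0. \<bar>log_Gamma_ratio x - (\<Sum>k<N. fps_nth laplace_kernel_fps k * fact k / x ^ Suc k)\<bar>
       \<le> C / x ^ Suc N"
proof -
  obtain C where "\<And>t. t \<ge> 0 \<Longrightarrow>
      \<bar>laplace_kernel t - (\<Sum>k<N. fps_nth laplace_kernel_fps k * t ^ k)\<bar> \<le> C * t ^ N"
    using has_fps_expansion_remainder_le_power[OF has_fps_expansion_laplace_kernel, of "1/2" N]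
      abs_laplace_kernel_le by auto
  then have "\<bar>laplace laplace_kernel x - (\<Sum>k<N. fps_nth laplace_kernel_fps k * fact k / x ^ Suc k)\<bar>
      \<le> C * fact N / x ^ Suc N" if "x > 0" for x
    using that by (intro watson_lemma) auto
  then show ?thesis
    by (auto simp: log_Gamma_ratio_eq_laplace)
qed

theorem theorem13:
  fixes N :: nat
  shows "(\<lambda>n::nat. ln (unit_ball_vol (real n) ^ 2 /
             (unit_ball_vol (real n - 1) * unit_ball_vol (real n + 1)))
           - (\<Sum>j=1..N. lambda_coeff j / real n ^ j))
         \<in> O(\<lambda>n. 1 / real n ^ (N + 1))"
proof -
  obtain C where C: "\<And>x. x > 0 \<Longrightarrow>
      \<bar>log_Gamma_ratio x - (\<Sum>k<N. fps_nth laplace_kernel_fps k * fact k / x ^ Suc k)\<bar> \<le> C / x ^ Suc N"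
    using log_Gamma_ratio_asymptotic by blast
  have "\<bar>ln (unit_ball_vol (real n) ^ 2 / (unit_ball_vol (real n - 1) * unit_ball_vol (real n + 1)))
           - (\<Sum>j=1..N. lambda_coeff j / real n ^ j)\<bar> \<le> C * 2 ^ Suc N * \<bar>1 / real n ^ (N + 1)\<bar>"
    if "n \<ge> 1" for n
  proof -
    have sum: "(\<Sum>j=1..N. lambda_coeff j / real n ^ j)
        = (\<Sum>k<N. fps_nth laplace_kernel_fps k * fact k / (real n / 2) ^ Suc k)"
      by (simp add: sum.atLeast1_atMost_eq lambda_coeff_Suc power_divide)
    have "ln (unit_ball_vol (real n) ^ 2 / (unit_ball_vol (real n - 1) * unit_ball_vol (real n + 1)))
        = log_Gamma_ratio (real n / 2)"
      by (rule ln_unit_ball_vol_ratio) simp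
    moreover have "C / (real n / 2) ^ Suc N = C * 2 ^ Suc N * \<bar>1 / real n ^ (N + 1)\<bar>"
      by (simp add: power_divide)
    ultimately show ?thesis
      using C[of "real n / 2"] that unfolding sum by simp
  qed
  then show ?thesis
    by (intro bigoI[where c = "C * 2 ^ Suc N"] eventually_mono[OF eventually_ge_at_top[of 1]]) auto
qed

end
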